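(* Let $\Delta x>0$, $\Delta t>0$ and $\lambda\in\mathbb{R}$, and let $(u_{i,j})_{(i,j)\in\mathbb{Z}^2}$ be an arbitrary real-valued grid function. Define $$\varphi_{-1,0}=\tfrac{1}{3}\,(\mu_n u_{-1,0}^2)\,(\mu_n u_{-1,0})+\mu_nD_m^2 u_{-2,0}+\lambda\,\Delta x^2\,D_mD_n\mu_m u_{-2,0},$$ and for $(i,j)\in\mathbb{Z}^2$ let $\varphi_{i,j}=S_m^{\,i+1}S_n^{\,j}\varphi_{-1,0}$ (so that, e.g., $\varphi_{0,0}=S_m\varphi_{-1,0}$). Let the scheme $\mathrm{EC}(\lambda)$ be $$\widetilde{\mathcal{A}}\equiv D_m(\widetilde{F_1})+D_n(\widetilde{G_1})=0,\qquad \widetilde{F_1}=\mu_m\varphi_{-1,0},\qquad \widetilde{G_1}=u_{0,0},$$ and define $$\widetilde{\mathcal{Q}}_3=\varphi_{0,0},\qquad \widetilde{G_3}=\tfrac{1}{12}u_{0,0}^4+\tfrac{1}{2}\,u_{0,0}\,(D_m^2u_{-1,0}),$$ $$\widetilde{F_3}=\tfrac{1}{2}\Big(\varphi_{-1,0}\varphi_{0,0}+(D_m\mu_nu_{-1,0})(D_n\mu_mu_{-1,0})-(\mu_m\mu_nu_{-1,0})(D_mD_nu_{-1,0})+\lambda\,\Delta x^2\,(D_nu_{0,0})(D_nu_{-1,0})\Big).$$ Then the identity $$\widetilde{\mathcal{Q}}_3\,\widetilde{\mathcal{A}}=D_m(\widetilde{F_3})+D_n(\widetilde{G_3})$$ holds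 for every grid function $u$. Consequently, every solution of the scheme $\mathrm{EC}(\lambda)$ satisfies both the discrete mass conservation law $D_m(\widetilde{F_1})+D_n(\widetilde{G_1})=0$ and the discrete energy conservation law $D_m(\widetilde{F_3})+D_n(\widetilde{G_3})=0$ (at every lattice point).
   Context: The scheme $\mathrm{EC}(\lambda)$ is a finite difference discretization, on a uniform grid with spacings $\Delta x,\Delta t$, of the modified Korteweg–de Vries equation $u_t+u^2u_x+u_{xxx}=0$, whose mass and energy conservation laws are $D_t(u)+D_x(\tfrac13u^3+u_{xx})=0$ and $D_t(\tfrac{1}{12}u^4+\tfrac12uu_{xx})+D_x\big(\tfrac12(\tfrac13u^3+u_{xx})^2+u_xu_t-uu_{xt}\big)=0$. Here $u_{i,j}$ approximates $u(x_0+i\Delta x,t_0+j\Delta t)$; all expressions are written relative to a generic lattice point $(0,0)$, and the forward shift operators act on any expression by shifting indices: $S_m u_{i,j}=u_{i+1,j}$, $S_n u_{i,j}=u_{i,j+1}$ (applied to all grid values appearing in the expression). With $I$ the identity, the forward differences and forward averages are $D_m=\tfrac{1}{\Delta x}(S_m-I)$, $D_n=\tfrac{1}{\Delta t}(S_n-I)$, $\mu_m=\tfrac12(S_m+I)$, $\mu_n=\tfrac12(S_n+I)$; e.g. $\mu_n u_{-1,0}^2=\tfrac12(u_{-1,0}^2+u_{-1,1}^2)$ and $D_m^2u_{-2,0}=(u_{0,0}-2u_{-1,0}+u_{-2,0})/\Delta x^2$. Products of operators denote composition, and operators act on the immediately following factor only. *)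

theory Defs
  imports Complex_Main
begin

text \<open>A lattice expression is represented by its values at all base points:
  E i j is the value of the expression written relative to (0,0), evaluated
  with base point (i,j).\<close>

type_synonym gridfn = "int \<Rightarrow> int \<Rightarrow> real"

definition Sm :: "gridfn \<Rightarrow> gridfn" where "Sm E = (\<lambda>i j. E (i + 1) j)"
definition Sn :: "gridfn \<Rightarrow> gridfn" where "Sn E = (\<lambda>i j. E i (j + 1))"
definition Dm :: "real \<Rightarrow> gridfn \<Rightarrow> gridfn" where "Dm dx E = (\<lambda>i j. (Sm E i j - E i j) / dx)"
definition Dn :: "real \<Rightarrow> gridfn \<Rightarrow> gridfn" where "Dn dt E = (\<lambda>i j. (Sn E i j - E i j) / dt)"
definition mum :: "gridfn \<Rightarrow> gridfn" where "mum E = (\<lambda>i j. (Sm E i j + E i j) / 2)"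
definition mun :: "gridfn \<Rightarrow> gridfn" where "mun E = (\<lambda>i j. (Sn E i j + E i j) / 2)"

definition gv :: "gridfn \<Rightarrow> int \<Rightarrow> int \<Rightarrow> gridfn" where "gv u a b = (\<lambda>i j. u (i + a) (j + b))"

definition phi_m10 :: "real \<Rightarrow> real \<Rightarrow> real \<Rightarrow> gridfn \<Rightarrow> gridfn" where
  "phi_m10 dx dt lam u = (\<lambda>i j.
     (1/3) * mun (\<lambda>i j. (gv u (-1) 0 i j)^2) i j * mun (gv u (-1) 0) i j
     + mun (Dm dx (Dm dx (gv u (-2) 0))) i j
     + lam * dx^2 * Dm dx (Dn dt (mum (gv u (-2) 0))) i j)"

definition phi_00 :: "real \<Rightarrow> real \<Rightarrow> real \<Rightarrow> gridfn \<Rightarrow> gridfn" where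
  "phi_00 dx dt lam u = Sm (phi_m10 dx dt lam u)"

definition F1 :: "real \<Rightarrow> real \<Rightarrow> real \<Rightarrow> gridfn \<Rightarrow> gridfn" where
  "F1 dx dt lam u = mum (phi_m10 dx dt lam u)"
definition G1 :: "gridfn \<Rightarrow> gridfn" where
  "G1 u = gv u 0 0"

definition schemeA :: "real \<Rightarrow> real \<Rightarrow> real \<Rightarrow> gridfn \<Rightarrow> gridfn" where
  "schemeA dx dt lam u = (\<lambda>i j. Dm dx (F1 dx dt lam u) i j + Dn dt (G1 u) i j)"

definition Q3 :: "real \<Rightarrow> real \<Rightarrow> real \<Rightarrow> gridfn \<Rightarrow> gridfn" where
  "Q3 dx dt lam u = phi_00 dx dt lam u"

definition G3 :: "real \<Rightarrow> gridfn \<Rightarrow> gridfn" where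
  "G3 dx u = (\<lambda>i j. (1/12) * (gv u 0 0 i j)^4 + (1/2) * gv u 0 0 i j * Dm dx (Dm dx (gv u (-1) 0)) i j)"

definition F3 :: "real \<Rightarrow> real \<Rightarrow> real \<Rightarrow> gridfn \<Rightarrow> gridfn" where
  "F3 dx dt lam u = (\<lambda>i j. (1/2) *
     ( phi_m10 dx dt lam u i j * phi_00 dx dt lam u i j
     + Dm dx (mun (gv u (-1) 0)) i j * Dn dt (mum (gv u (-1) 0)) i j
     - mum (mun (gv u (-1) 0)) i j * Dm dx (Dn dt (gv u (-1) 0)) i j
     + lam * dx^2 * Dn dt (gv u 0 0) i j * Dn dt (gv u (-1) 0) i j))"

end

theory Submission
  imports Defs
begin

text \<open>Write phi_00 = N + L + lam dx^2 M with cubic part N, dispersive part L and correction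
  M, and multiply the scheme by it.  The flux term telescopes, since
  phi_0 (phi_1 - phi_-1) = phi_0 phi_1 - phi_-1 phi_0; so does M D_n u_00, because M = D_m mu_m psi and
  D_n u_00 = S_m psi for psi = D_n u_-10.  The cubic part gives D_n (u^4/12), as
  (a^2 + b^2)(a + b)(b - a) = b^4 - a^4, and L D_n u is a discrete form of
  u_t u_xx = (u u_xx)_t / 2 + (u_t u_x - u u_xt)_x / 2.  No identity needs dx, dt \<noteq> 0: division
  by zero yields 0 on both sides.\<close>

lemma Dm_add: "Dm dx (\<lambda>i j. f i j + g i j) i j = Dm dx f i j + Dm dx g i j"
  by (simp add: Dm_def Sm_def diff_divide_distrib[symmetric] add_divide_distrib[symmetric])

lemma Dm_cmult: "Dm dx (\<lambda>i j. c * f i j) i j = c * Dm dx f i j"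
  by (simp add: Dm_def Sm_def right_diff_distrib)

lemma Dn_add: "Dn dt (\<lambda>i j. f i j + g i j) i j = Dn dt f i j + Dn dt g i j"
  by (simp add: Dn_def Sn_def diff_divide_distrib[symmetric] add_divide_distrib[symmetric])

lemma Sm_mul_Dm_mum: "Sm f i j * Dm dx (mum f) i j = Dm dx (\<lambda>i j. f i j * Sm f i j / 2) i j"
  by (cases "dx = 0") (simp_all add: Dm_def Sm_def mum_def field_simps)

lemma mun_cube_mul_Dn:
  "(1/3) * mun (\<lambda>i j. (w i j)\<^sup>2) i j * mun w i j * Dn dt w i j = Dn dt (\<lambda>i j. (1/12) * (w i j)^4) i j"
  by (cases "dt = 0") (simp_all add: Dn_def Sn_def mun_def field_simps power2_eq_square power4_eq_xxxx)

lemma mun_Dm2_mul_Dn: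
  "mun (Dm dx (Dm dx v)) i j * Dn dt (Sm v) i j
     = Dm dx (\<lambda>i j. (1/2) * (Dm dx (mun v) i j * Dn dt (mum v) i j
                            - mum (mun v) i j * Dm dx (Dn dt v) i j)) i j
       + Dn dt (\<lambda>i j. (1/2) * Sm v i j * Dm dx (Dm dx v) i j) i j"
  by (cases "dx = 0 \<or> dt = 0") (auto simp: Dm_def Dn_def Sm_def Sn_def mum_def mun_def field_simps)

lemma Sm_gv: "Sm (gv u a b) = gv u (a + 1) b"
  by (simp add: Sm_def gv_def ac_simps)

lemma Sm_Dn: "Sm (Dn dt E) = Dn dt (Sm E)"
  by (simp add: Sm_def Dn_def Sn_def)

lemma phi_00_eq:
  "phi_00 dx dt lam u i j
     = (1/3) * mun (\<lambda>i j. (gv u 0 0 i j)\<^sup>2) i j * mun (gv u 0 0) i j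
       + mun (Dm dx (Dm dx (gv u (-1) 0))) i j
       + lam * dx\<^sup>2 * Dm dx (mum (Dn dt (gv u (-1) 0))) i j"
  by (cases "dx = 0 \<or> dt = 0")
    (auto simp: phi_00_def phi_m10_def Sm_def Sn_def Dm_def Dn_def mum_def mun_def gv_def
      ac_simps field_simps)

lemma F3_eq:
  "F3 dx dt lam u = (\<lambda>i j. phi_m10 dx dt lam u i j * Sm (phi_m10 dx dt lam u) i j / 2
     + (1/2) * (Dm dx (mun (gv u (-1) 0)) i j * Dn dt (mum (gv u (-1) 0)) i j
                - mum (mun (gv u (-1) 0)) i j * Dm dx (Dn dt (gv u (-1) 0)) i j)
     + lam * dx\<^sup>2 * (Dn dt (gv u (-1) 0) i j * Sm (Dn dt (gv u (-1) 0)) i j / 2))"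
  by (simp add: F3_def phi_00_def Sm_Dn Sm_gv algebra_simps)

lemma Q3_mul_schemeA:
  "Q3 dx dt lam u i j * schemeA dx dt lam u i j = Dm dx (F3 dx dt lam u) i j + Dn dt (G3 dx u) i j"
proof -
  define \<phi> where "\<phi> = phi_m10 dx dt lam u"
  define v where "v = gv u (-1) 0"
  define \<psi> where "\<psi> = Dn dt v"
  have w: "gv u 0 0 = Sm v"
    by (simp add: v_def Sm_gv)
  have F3_split: "Dm dx (F3 dx dt lam u) i j
      = Dm dx (\<lambda>i j. \<phi> i j * Sm \<phi> i j / 2) i j
        + Dm dx (\<lambda>i j. (1/2) * (Dm dx (mun v) i j * Dn dt (mum v) i j
                                 - mum (mun v) i j * Dm dx (Dn dt v) i j)) i j
        + lam * dx\<^sup>2 * Dm dx (\<lambda>i j. \<psi> i j * Sm \<psi> i j / 2) i j"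
    unfolding F3_eq \<phi>_def[symmetric] v_def[symmetric] \<psi>_def[symmetric]
    by (simp only: Dm_add Dm_cmult)
  have G3_split: "Dn dt (G3 dx u) i j
      = Dn dt (\<lambda>i j. (1/12) * (Sm v i j)^4) i j
        + Dn dt (\<lambda>i j. (1/2) * Sm v i j * Dm dx (Dm dx v) i j) i j"
    unfolding G3_def w v_def by (rule Dn_add)
  have "Q3 dx dt lam u i j * schemeA dx dt lam u i j
      = Sm \<phi> i j * Dm dx (mum \<phi>) i j + phi_00 dx dt lam u i j * Dn dt (Sm v) i j"
    by (simp add: Q3_def schemeA_def F1_def G1_def phi_00_def \<phi>_def w distrib_left)
  also have "\<dots> = Sm \<phi> i j * Dm dx (mum \<phi>) i j
      + (1/3) * mun (\<lambda>i j. (Sm v i j)\<^sup>2) i j * mun (Sm v) i j * Dn dt (Sm v) i j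
      + mun (Dm dx (Dm dx v)) i j * Dn dt (Sm v) i j
      + lam * dx\<^sup>2 * (Sm \<psi> i j * Dm dx (mum \<psi>) i j)"
    by (simp add: phi_00_eq w v_def \<psi>_def Sm_Dn algebra_simps)
  also have "\<dots> = Dm dx (F3 dx dt lam u) i j + Dn dt (G3 dx u) i j"
    unfolding F3_split G3_split Sm_mul_Dm_mum mun_cube_mul_Dn mun_Dm2_mul_Dn by simp
  finally show ?thesis .
qed

theorem mainTheorem1:
  fixes dx dt lam :: real and u :: gridfn
  assumes "dx > 0" and "dt > 0"
  shows "(\<forall>i j. Q3 dx dt lam u i j * schemeA dx dt lam u i j
                 = Dm dx (F3 dx dt lam u) i j + Dn dt (G3 dx u) i j)
       \<and> ((\<forall>i j. schemeA dx dt lam u i j = 0) \<longrightarrow>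
            (\<forall>i j. Dm dx (F1 dx dt lam u) i j + Dn dt (G1 u) i j = 0)
          \<and> (\<forall>i j. Dm dx (F3 dx dt lam u) i j + Dn dt (G3 dx u) i j = 0))"
  using Q3_mul_schemeA by (metis mult_zero_right schemeA_def)

end
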